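(* For all integers $s,t\ge 1$, the complete tripartite graph $K_{1,s,t}$ has property $M(3)$. Consequently, if $\max\{s,t\}\ge 2$, then $m(K_{1,s,t})=3$.
   Context: All graphs are finite, simple and undirected. A list assignment $L$ for a graph $G$ assigns to each vertex $v$ a set $L(v)$ of colors; an $L$-coloring is a proper vertex coloring $c$ of $G$ with $c(v)\in L(v)$ for every vertex $v$. A $k$-list assignment is a list assignment with $|L(v)|=k$ for all $v$. $G$ is uniquely $k$-list colorable (U$k$LC) if there exists a $k$-list assignment $L$ such that $G$ has exactly one $L$-coloring. $G$ has property $M(k)$ if it is not U$k$LC, i.e. for every $k$-list assignment $L$, $G$ has either no $L$-coloring or at least two $L$-colorings. The m-number $m(G)$ is the least integer $k\ge 1$ such that $G$ has property $M(k)$. $K_{n_1,\dots,n_r}$ denotes the complete $r$-partite graph with parts of sizes $n_1,\dots,n_r$. *)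

theory Defs
  imports Main
begin

text \<open>A finite simple graph is given by a vertex set V and a symmetric,
irreflexive adjacency relation E. Colors are natural numbers; a list
assignment L gives each vertex a set of colors.\<close>

definition is_L_coloring ::
  "'a set \<Rightarrow> ('a \<Rightarrow> 'a \<Rightarrow> bool) \<Rightarrow> ('a \<Rightarrow> nat set) \<Rightarrow> ('a \<Rightarrow> nat) \<Rightarrow> bool" where
  "is_L_coloring V E L c \<longleftrightarrow>
     (\<forall>v\<in>V. c v \<in> L v) \<and> (\<forall>u\<in>V. \<forall>v\<in>V. E u v \<longrightarrow> c u \<noteq> c v)"

definition is_k_list_assignment ::
  "'a set \<Rightarrow> ('a \<Rightarrow> nat set) \<Rightarrow> nat \<Rightarrow> bool" where
  "is_k_list_assignment V L k \<longleftrightarrow> (\<forall>v\<in>V. finite (L v) \<and> card (L v) = k)"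

definition unique_L_coloring ::
  "'a set \<Rightarrow> ('a \<Rightarrow> 'a \<Rightarrow> bool) \<Rightarrow> ('a \<Rightarrow> nat set) \<Rightarrow> bool" where
  "unique_L_coloring V E L \<longleftrightarrow>
     (\<exists>c. is_L_coloring V E L c \<and>
          (\<forall>c'. is_L_coloring V E L c' \<longrightarrow> (\<forall>v\<in>V. c' v = c v)))"

definition uniquely_k_list_colorable ::
  "'a set \<Rightarrow> ('a \<Rightarrow> 'a \<Rightarrow> bool) \<Rightarrow> nat \<Rightarrow> bool" where
  "uniquely_k_list_colorable V E k \<longleftrightarrow>
     (\<exists>L. is_k_list_assignment V L k \<and> unique_L_coloring V E L)"

definition property_M :: "'a set \<Rightarrow> ('a \<Rightarrow> 'a \<Rightarrow> bool) \<Rightarrow> nat \<Rightarrow> bool" where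
  "property_M V E k \<longleftrightarrow> \<not> uniquely_k_list_colorable V E k"

definition m_number :: "'a set \<Rightarrow> ('a \<Rightarrow> 'a \<Rightarrow> bool) \<Rightarrow> nat" where
  "m_number V E = (LEAST k. k \<ge> 1 \<and> property_M V E k)"

text \<open>Complete multipartite graph K_{n_1,...,n_r}: vertex (i,j) is the j-th
vertex of part i; two vertices are adjacent iff they lie in different parts.\<close>
definition cmp_vertices :: "nat list \<Rightarrow> (nat \<times> nat) set" where
  "cmp_vertices ns = {(i, j). i < length ns \<and> j < ns ! i}"

definition cmp_adj :: "nat \<times> nat \<Rightarrow> nat \<times> nat \<Rightarrow> bool" where
  "cmp_adj u v \<longleftrightarrow> fst u \<noteq> fst v"

end

theory Submission
  imports Defs
begin

(* Let c be the unique L-colouring of K_{1,s,t} for some 3-list assignment L. Removing the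
   colour of the centre from the other lists and trimming them to 2-lists around c leaves a
   2-list assignment of K_{s,t} of which c is still the unique colouring. But K_{s,t} has
   no unique 2-list colouring: switch every vertex v to the other colour z v of its list.
   Switching v alone is not a colouring, so some neighbour u of v, on the opposite side,
   has c u = z v; for adjacent v, w these witnesses are adjacent as well, so z is a second
   colouring.
   On the other hand K_{1,s,t} is uniquely 1-list colourable (lists {part of v}), and, when some
   part contains two vertices b, b', uniquely 2-list colourable: the lists {1,2} on the
   centre, {2,3} on the other part, {1,3} on b and {1,2} on the rest of the part of b
   force the colours 2, 3, 1 on the three parts. *)

lemma is_L_coloringD:
  assumes "is_L_coloring V E L c"
  shows "v \<in> V \<Longrightarrow> c v \<in> L v"
    and "u \<in> V \<Longrightarrow> v \<in> V \<Longrightarrow> E u v \<Longrightarrow> c u \<noteq> c v"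
  using assms unfolding is_L_coloring_def by auto

lemma unique_L_coloring_recolor:
  assumes c: "is_L_coloring V E L c"
    and uniq: "\<forall>c'. is_L_coloring V E L c' \<longrightarrow> (\<forall>v\<in>V. c' v = c v)"
    and v: "v \<in> V" "x \<in> L v" "x \<noteq> c v"
  shows "\<exists>u\<in>V. (E u v \<or> E v u) \<and> c u = x"
proof (rule ccontr)
  assume "\<not> ?thesis"
  then have "is_L_coloring V E L (c(v := x))"
    using is_L_coloringD[OF c] v unfolding is_L_coloring_def by auto
  then show False
    using uniq v by fastforce
qed

lemma exists_subset_card_containing:
  assumes "finite A" "x \<in> A" "1 \<le> k" "k \<le> card A"
  shows "\<exists>B\<subseteq>A. x \<in> B \<and> card B = k"
proof -
  have "k - 1 \<le> card (A - {x})"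
    using card_Diff_singleton[OF assms(2)] assms(4) by linarith
  then obtain T where T: "T \<subseteq> A - {x}" "card T = k - 1" "finite T"
    by (rule obtain_subset_with_card_n)
  moreover have "card (insert x T) = k"
    using T assms(3) by (simp add: subset_Diff_insert)
  moreover have "insert x T \<subseteq> A"
    using T(1) assms(2) by blast
  ultimately show ?thesis
    by (intro exI[of _ "insert x T"]) simp
qed

lemma complete_bipartite_property_M_2:
  fixes side :: "'a \<Rightarrow> bool"
  assumes adj: "\<And>u v. u \<in> V \<Longrightarrow> v \<in> V \<Longrightarrow> E u v \<longleftrightarrow> side u \<noteq> side v"
    and "V \<noteq> {}"
  shows "property_M V E 2"
  unfolding property_M_def uniquely_k_list_colorable_def unique_L_coloring_def
proof (intro notI, elim exE conjE)
  fix L c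
  assume L: "is_k_list_assignment V L 2" and c: "is_L_coloring V E L c"
    and uniq: "\<forall>c'. is_L_coloring V E L c' \<longrightarrow> (\<forall>v\<in>V. c' v = c v)"
  define z where "z v = (SOME x. x \<in> L v - {c v})" for v
  have z: "z v \<in> L v - {c v}" if "v \<in> V" for v
  proof -
    have "finite (L v)" "\<not> card (L v) \<le> Suc 0"
      using L that unfolding is_k_list_assignment_def by auto
    then have "\<exists>x. x \<in> L v - {c v}"
      by (metis DiffI card_le_Suc0_iff_eq singletonD)
    then show ?thesis
      unfolding z_def by (rule someI_ex)
  qed
  have z_taken: "\<exists>u\<in>V. side u \<noteq> side v \<and> c u = z v" if "v \<in> V" for v
    using unique_L_coloring_recolor[OF c uniq that] z[OF that] adj that by fastforce
  have z_coloring: "is_L_coloring V E L z"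
    unfolding is_L_coloring_def
  proof (intro conjI ballI impI)
    fix u w assume "u \<in> V" "w \<in> V" "E u w"
    then have "side u \<noteq> side w"
      using adj by blast
    moreover obtain u' w' where u': "u' \<in> V" "side u' \<noteq> side u" "c u' = z u"
      and w': "w' \<in> V" "side w' \<noteq> side w" "c w' = z w"
      using z_taken \<open>u \<in> V\<close> \<open>w \<in> V\<close> by meson
    ultimately have "E u' w'"
      using adj[OF u'(1) w'(1)] by auto
    then show "z u \<noteq> z w"
      using is_L_coloringD(2)[OF c u'(1) w'(1)] u'(3) w'(3) by simp
  next
    fix v assume "v \<in> V"
    then show "z v \<in> L v"
      using z by blast
  qed
  obtain v where "v \<in> V"
    using \<open>V \<noteq> {}\<close> by blast
  then have "z v = c v"
    using uniq z_coloring by blast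
  with z[OF \<open>v \<in> V\<close>] show False
    by simp
qed

lemma unique_L_coloring_delete_vertex:
  assumes "a \<in> V"
    and c: "is_L_coloring V E L c"
    and uniq: "\<forall>c'. is_L_coloring V E L c' \<longrightarrow> (\<forall>v\<in>V. c' v = c v)"
    and L': "\<And>v. v \<in> V - {a} \<Longrightarrow> L' v \<subseteq> L v - {c a} \<and> c v \<in> L' v"
  shows "unique_L_coloring (V - {a}) E L'"
  unfolding unique_L_coloring_def
proof (intro exI conjI allI impI)
  show "is_L_coloring (V - {a}) E L' c"
    using L' is_L_coloringD(2)[OF c] unfolding is_L_coloring_def by blast
  fix d assume d: "is_L_coloring (V - {a}) E L' d"
  have "\<not> E a a"
    using is_L_coloringD(2)[OF c \<open>a \<in> V\<close> \<open>a \<in> V\<close>] by blast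
  moreover have "d v \<in> L v" "d v \<noteq> c a" if "v \<in> V - {a}" for v
    using is_L_coloringD(1)[OF d that] L'[OF that] by blast+
  ultimately have "is_L_coloring V E L (d(a := c a))"
    using is_L_coloringD(1)[OF c] is_L_coloringD(2)[OF d]
    unfolding is_L_coloring_def by (metis DiffI fun_upd_apply singletonD)
  then have "\<forall>v\<in>V. (d(a := c a)) v = c v"
    using uniq by blast
  then show "\<forall>v\<in>V - {a}. d v = c v"
    by (metis DiffE fun_upd_other singletonI)
qed

lemma property_M_Suc_universal_vertex:
  assumes "a \<in> V" and universal: "\<And>v. v \<in> V \<Longrightarrow> v \<noteq> a \<Longrightarrow> E a v"
    and "1 \<le> k" and M: "property_M (V - {a}) E k"
  shows "property_M V E (Suc k)"
  unfolding property_M_def uniquely_k_list_colorable_def unique_L_coloring_def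
proof (intro notI, elim exE conjE)
  fix L c
  assume L: "is_k_list_assignment V L (Suc k)" and c: "is_L_coloring V E L c"
    and uniq: "\<forall>c'. is_L_coloring V E L c' \<longrightarrow> (\<forall>v\<in>V. c' v = c v)"
  define L' where "L' v = (SOME B. B \<subseteq> L v - {c a} \<and> c v \<in> B \<and> card B = k)" for v
  have L': "L' v \<subseteq> L v - {c a} \<and> c v \<in> L' v \<and> card (L' v) = k" if "v \<in> V - {a}" for v
  proof -
    have fin: "finite (L v)" "card (L v) = Suc k"
      using L that unfolding is_k_list_assignment_def by auto
    have "c v \<in> L v - {c a}"
      using is_L_coloringD[OF c] universal \<open>a \<in> V\<close> that by fastforce
    moreover have "k \<le> card (L v - {c a})"
      using diff_card_le_card_Diff[of "{c a}" "L v"] fin by simp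
    ultimately obtain B where "B \<subseteq> L v - {c a}" "c v \<in> B" "card B = k"
      using exists_subset_card_containing[of "L v - {c a}" "c v" k] fin \<open>1 \<le> k\<close> by auto
    then have "\<exists>B. B \<subseteq> L v - {c a} \<and> c v \<in> B \<and> card B = k"
      by (intro exI[of _ B]) simp
    then show ?thesis
      unfolding L'_def by (rule someI_ex)
  qed
  have "is_k_list_assignment (V - {a}) L' k"
    unfolding is_k_list_assignment_def
  proof
    fix v assume v: "v \<in> V - {a}"
    then have "finite (L v)"
      using L unfolding is_k_list_assignment_def by blast
    then show "finite (L' v) \<and> card (L' v) = k"
      using L'[OF v] by (metis finite_Diff finite_subset)
  qed
  moreover have "unique_L_coloring (V - {a}) E L'"
    using unique_L_coloring_delete_vertex[OF \<open>a \<in> V\<close> c uniq] L' by blast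
  ultimately show False
    using M unfolding property_M_def uniquely_k_list_colorable_def by blast
qed

lemma proper_coloring_uniquely_1_list_colorable:
  fixes f :: "'a \<Rightarrow> nat"
  assumes "\<And>u v. u \<in> V \<Longrightarrow> v \<in> V \<Longrightarrow> E u v \<Longrightarrow> f u \<noteq> f v"
  shows "uniquely_k_list_colorable V E 1"
  unfolding uniquely_k_list_colorable_def unique_L_coloring_def
proof (intro exI conjI allI impI)
  show "is_k_list_assignment V (\<lambda>v. {f v}) 1"
    by (simp add: is_k_list_assignment_def)
  show "is_L_coloring V E (\<lambda>v. {f v}) f"
    using assms unfolding is_L_coloring_def by simp
  fix c' assume "is_L_coloring V E (\<lambda>v. {f v}) c'"
  then show "\<forall>v\<in>V. c' v = f v"
    unfolding is_L_coloring_def by simp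
qed

lemma complete_tripartite_uniquely_2_list_colorable:
  fixes part :: "'a \<Rightarrow> nat"
  assumes adj: "\<And>u v. u \<in> V \<Longrightarrow> v \<in> V \<Longrightarrow> E u v \<longleftrightarrow> part u \<noteq> part v"
    and parts: "\<And>v. v \<in> V \<Longrightarrow> part v \<in> {0, 1, 2}"
    and a: "a \<in> V" "part a = 0" and w: "w \<in> V" "part w = 2"
    and b: "b \<in> V" "b' \<in> V" "b \<noteq> b'" "part b = 1" "part b' = 1"
  shows "uniquely_k_list_colorable V E 2"
proof -
  define L :: "'a \<Rightarrow> nat set" where
    "L v = (if part v = 0 then {1, 2} else if part v = 2 then {2, 3}
            else if v = b then {1, 3} else {1, 2})" for v
  define f :: "'a \<Rightarrow> nat" where
    "f v = (if part v = 0 then 2 else if part v = 2 then 3 else 1)" for v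
  have "is_k_list_assignment V L 2"
    by (simp add: is_k_list_assignment_def L_def)
  moreover have "is_L_coloring V E L f"
    unfolding is_L_coloring_def
  proof (intro conjI ballI impI)
    fix u v assume "u \<in> V" "v \<in> V" "E u v"
    then show "f u \<noteq> f v"
      using parts[of u] parts[of v] adj by (auto simp: f_def)
  qed (auto simp: L_def f_def)
  moreover have "\<forall>v\<in>V. d v = f v" if d: "is_L_coloring V E L d" for d
  proof -
    note dL = is_L_coloringD(1)[OF d]
    have dE: "d u \<noteq> d v" if "u \<in> V" "v \<in> V" "part u \<noteq> part v" for u v
      using is_L_coloringD(2)[OF d that(1,2)] adj[OF that(1,2)] that(3) by blast
    have part0: "d x = 2" if x: "x \<in> V" "part x = 0" for x
    proof (rule ccontr)
      assume "d x \<noteq> 2"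
      then have "d x = 1"
        using dL[OF x(1)] x(2) by (auto simp: L_def)
      then have "d b = 3"
        using dL[OF b(1)] dE[OF b(1) x(1)] b x by (auto simp: L_def)
      then have "d w = 2"
        using dL[OF w(1)] dE[OF w(1) b(1)] b w by (auto simp: L_def)
      then show False
        using dL[OF b(2)] dE[OF b(2) x(1)] dE[OF b(2) w(1)] \<open>d x = 1\<close> b w x
        by (auto simp: L_def)
    qed
    have part2: "d y = 3" if y: "y \<in> V" "part y = 2" for y
      using dL[OF y(1)] dE[OF y(1) a(1)] part0[OF a] a y by (auto simp: L_def)
    have part1: "d v = 1" if v: "v \<in> V" "part v = 1" for v
      using dL[OF v(1)] dE[OF v(1) a(1)] dE[OF v(1) w(1)] part0[OF a] part2[OF w] a w v
      by (auto simp: L_def split: if_splits)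
    show ?thesis
    proof
      fix v assume "v \<in> V"
      then show "d v = f v"
        using parts[of v] part0 part1 part2 by (auto simp: f_def)
    qed
  qed
  ultimately show ?thesis
    unfolding uniquely_k_list_colorable_def unique_L_coloring_def by blast
qed

lemma m_number_eqI:
  assumes "1 \<le> k" "property_M V E k" "\<And>j. 1 \<le> j \<Longrightarrow> j < k \<Longrightarrow> \<not> property_M V E j"
  shows "m_number V E = k"
  unfolding m_number_def using assms by (intro Least_equality) (auto simp flip: not_less)

lemma cmp_vertices_1_s_t:
  "cmp_vertices [1, s, t] = insert (0, 0) ({(1, j) | j. j < s} \<union> {(2, j) | j. j < t})"
  by (auto simp: cmp_vertices_def less_Suc_eq numeral_eq_Suc)

lemma property_M_3_K_1_s_t:
  assumes "s \<ge> 1"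
  shows "property_M (cmp_vertices [1, s, t]) cmp_adj 3"
proof -
  have "property_M (cmp_vertices [1, s, t] - {(0, 0)}) cmp_adj 2"
    by (rule complete_bipartite_property_M_2[where side = "\<lambda>v. fst v = 1"])
      (use assms in \<open>unfold cmp_vertices_1_s_t, auto simp: cmp_adj_def Suc_le_eq\<close>)
  then have "property_M (cmp_vertices [1, s, t]) cmp_adj (Suc 2)"
    by (rule property_M_Suc_universal_vertex[rotated 3])
      (unfold cmp_vertices_1_s_t, auto simp: cmp_adj_def)
  then show ?thesis
    by simp
qed

lemma uniquely_2_list_colorable_K_1_s_t:
  assumes "s \<ge> 1" "t \<ge> 1" "max s t \<ge> 2"
  shows "uniquely_k_list_colorable (cmp_vertices [1, s, t]) cmp_adj 2"
proof (cases "s \<ge> 2")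
  case True
  then show ?thesis
    by (intro complete_tripartite_uniquely_2_list_colorable[where part = fst
          and a = "(0, 0)" and w = "(2, 0)" and b = "(1, 0)" and b' = "(1, 1)"])
      (use assms in \<open>unfold cmp_vertices_1_s_t, auto simp: cmp_adj_def\<close>)
next
  case False
  then have "t \<ge> 2"
    using assms(3) by linarith
  then show ?thesis
    by (intro complete_tripartite_uniquely_2_list_colorable
          [where part = "\<lambda>v. if fst v = 0 then 0 else 3 - fst v"
          and a = "(0, 0)" and w = "(1, 0)" and b = "(2, 0)" and b' = "(2, 1)"])
      (use assms in \<open>unfold cmp_vertices_1_s_t, auto simp: cmp_adj_def\<close>)
qed

theorem proposition3p5:
  fixes s t :: nat
  assumes "s \<ge> 1" and "t \<ge> 1"
  shows "property_M (cmp_vertices [1, s, t]) cmp_adj 3 \<and>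
         (max s t \<ge> 2 \<longrightarrow> m_number (cmp_vertices [1, s, t]) cmp_adj = 3)"
proof (intro conjI impI)
  show M3: "property_M (cmp_vertices [1, s, t]) cmp_adj 3"
    using property_M_3_K_1_s_t assms(1) .
  assume "max s t \<ge> 2"
  have "\<not> property_M (cmp_vertices [1, s, t]) cmp_adj j" if "1 \<le> j" "j < 3" for j
  proof -
    have "j = 1 \<or> j = 2"
      using that by linarith
    then show ?thesis
      using proper_coloring_uniquely_1_list_colorable[of _ cmp_adj fst]
        uniquely_2_list_colorable_K_1_s_t[OF assms \<open>max s t \<ge> 2\<close>]
      unfolding property_M_def cmp_adj_def by blast
  qed
  then show "m_number (cmp_vertices [1, s, t]) cmp_adj = 3"
    by (intro m_number_eqI M3) simp_all
qed

end
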